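(* Let $R$ be a set of $n$ red points and $B$ a set of $n$ blue points, all distinct and on the line $y=0$, given sorted by $x$-coordinate. Then a minimum-weight non-crossing bichromatic perfect matching of $R\cup B$ (with arcs drawn above $y=0$) can be computed in $O(n)$ time. *)

theory Defs
  imports Complex_Main
begin

text \<open>Points lie on the line y = 0 and are identified with their x-coordinates.\<close>

definition bichromatic_perfect_matching :: "real set \<Rightarrow> real set \<Rightarrow> (real \<times> real) set \<Rightarrow> bool" where
  "bichromatic_perfect_matching R B M \<longleftrightarrow>
     M \<subseteq> R \<times> B \<and> (\<forall>r\<in>R. \<exists>!b. (r, b) \<in> M) \<and> (\<forall>b\<in>B. \<exists>!r. (r, b) \<in> M)"

text \<open>Two arcs drawn above the line cross iff their endpoints interleave.\<close>
definition arcs_cross :: "real \<times> real \<Rightarrow> real \<times> real \<Rightarrow> bool" where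
  "arcs_cross e f \<longleftrightarrow>
     (let l1 = min (fst e) (snd e); h1 = max (fst e) (snd e);
          l2 = min (fst f) (snd f); h2 = max (fst f) (snd f)
      in (l1 < l2 \<and> l2 < h1 \<and> h1 < h2) \<or> (l2 < l1 \<and> l1 < h2 \<and> h2 < h1))"

definition non_crossing :: "(real \<times> real) set \<Rightarrow> bool" where
  "non_crossing M \<longleftrightarrow> (\<forall>e\<in>M. \<forall>f\<in>M. \<not> arcs_cross e f)"

definition matching_weight :: "(real \<times> real) set \<Rightarrow> real" where
  "matching_weight M = (\<Sum>(r, b)\<in>M. \<bar>r - b\<bar>)"

definition min_weight_nc_matching :: "real set \<Rightarrow> real set \<Rightarrow> (real \<times> real) set \<Rightarrow> bool" where
  "min_weight_nc_matching R B M \<longleftrightarrow>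
     bichromatic_perfect_matching R B M \<and> non_crossing M \<and>
     (\<forall>M'. bichromatic_perfect_matching R B M' \<and> non_crossing M' \<longrightarrow>
            matching_weight M \<le> matching_weight M')"

text \<open>The algorithm: a left-to-right scan with a (monochromatic) stack.
  Input points are (x, is_red); output pairs are (red x, blue x).\<close>
fun match_scan :: "(real \<times> bool) list \<Rightarrow> (real \<times> bool) list \<Rightarrow> (real \<times> real) list" where
  "match_scan [] stk = []"
| "match_scan (p # ps) [] = match_scan ps [p]"
| "match_scan (p # ps) (q # stk) =
     (if snd p = snd q then match_scan ps (p # q # stk)
      else (if snd p then (fst p, fst q) else (fst q, fst p)) # match_scan ps stk)"

definition line_matching :: "(real \<times> bool) list \<Rightarrow> (real \<times> real) list" where
  "line_matching ps = match_scan ps []"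

text \<open>Running-time (step-count) functions, written in the style produced by the
  HOL-Library time_fun command: each call costs one unit plus the cost of its
  recursive calls; constant-time primitives (fst, snd, comparisons, Cons) are
  charged one unit each.\<close>
fun T_match_scan :: "(real \<times> bool) list \<Rightarrow> (real \<times> bool) list \<Rightarrow> nat" where
  "T_match_scan [] stk = 1"
| "T_match_scan (p # ps) [] = T_match_scan ps [p] + 1"
| "T_match_scan (p # ps) (q # stk) =
     (if snd p = snd q then T_match_scan ps (p # q # stk) + 3
      else T_match_scan ps stk + 6)"

definition T_line_matching :: "(real \<times> bool) list \<Rightarrow> nat" where
  "T_line_matching ps = T_match_scan ps [] + 1"

end

theory Submission
  imports Defs
begin

(* The scan first matches the leftmost adjacent pair p < q of opposite colours; every point
   left of p has the colour of p.  Some minimum-weight perfect matching, crossing or not,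
   contains the edge pq: if p and q are matched to x and y instead, then x has the colour
   of q and hence lies right of q, while y lies outside [p, q], and for such positions
   |p - q| + |x - y| <= |x - p| + |y - q|, so swapping to the edges pq and xy does not
   increase the weight.  No point lies between p and q, so the arc pq crosses no other arc.
   On the remaining points the scan behaves exactly as on the whole input, and induction
   gives optimality and non-crossing.  Each scan step costs at most six units. *)

definition coloured_points :: "real set \<Rightarrow> real set \<Rightarrow> (real \<times> bool) set" where
  "coloured_points R B = (\<lambda>r. (r, True)) ` R \<union> (\<lambda>b. (b, False)) ` B"

definition min_weight_matching :: "real set \<Rightarrow> real set \<Rightarrow> (real \<times> real) set \<Rightarrow> bool" where
  "min_weight_matching R B M \<longleftrightarrow>
     bichromatic_perfect_matching R B M \<and>
     (\<forall>M'. bichromatic_perfect_matching R B M' \<longrightarrow> matching_weight M \<le> matching_weight M')"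

lemma mem_coloured_points [simp]:
  "(x, c) \<in> coloured_points R B \<longleftrightarrow> (if c then x \<in> R else x \<in> B)"
  unfolding coloured_points_def by auto

lemma coloured_points_remove:
  "coloured_points R B - {(r, True), (b, False)} = coloured_points (R - {r}) (B - {b})"
  unfolding coloured_points_def by auto

lemma card_coloured_points:
  "finite R \<Longrightarrow> finite B \<Longrightarrow> card (coloured_points R B) = card R + card B"
  unfolding coloured_points_def by (subst card_Un_disjoint) (auto simp: card_image inj_on_def)

lemma length_eq_card_coloured_points:
  assumes "sorted_wrt (\<lambda>p q. fst p < fst q) ps" "set ps = coloured_points R B" "finite R" "finite B"
  shows "length ps = card R + card B"
proof -
  have "distinct ps"
    using assms(1) by (induction ps) auto
  then show ?thesis
    using assms(2-4) by (simp add: distinct_card[symmetric] card_coloured_points)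
qed

lemma bichromatic_perfect_matching_iff_inj:
  "bichromatic_perfect_matching R B M \<longleftrightarrow>
     fst ` M = R \<and> snd ` M = B \<and> inj_on fst M \<and> inj_on snd M"
proof (intro iffI; (elim conjE)?)
  assume "bichromatic_perfect_matching R B M"
  then have sub: "M \<subseteq> R \<times> B" and R: "\<forall>r\<in>R. \<exists>!b. (r, b) \<in> M" and B: "\<forall>b\<in>B. \<exists>!r. (r, b) \<in> M"
    unfolding bichromatic_perfect_matching_def by blast+
  have "fst ` M = R"
    using sub R by force
  moreover have "snd ` M = B"
    using sub B by force
  moreover have "inj_on fst M"
  proof (rule inj_onI)
    fix x y assume "x \<in> M" "y \<in> M" "fst x = fst y"
    then show "x = y" using sub R by (metis mem_Sigma_iff prod.collapse subsetD)
  qed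
  moreover have "inj_on snd M"
  proof (rule inj_onI)
    fix x y assume "x \<in> M" "y \<in> M" "snd x = snd y"
    then show "x = y" using sub B by (metis mem_Sigma_iff prod.collapse subsetD)
  qed
  ultimately show "fst ` M = R \<and> snd ` M = B \<and> inj_on fst M \<and> inj_on snd M" by blast
next
  assume R: "fst ` M = R" and B: "snd ` M = B" and inj: "inj_on fst M" "inj_on snd M"
  have sub: "M \<subseteq> R \<times> B"
    using subset_fst_snd[of M] R B by simp
  have "\<exists>!b. (r, b) \<in> M" if "r \<in> R" for r
  proof -
    obtain b where "(r, b) \<in> M" using \<open>r \<in> R\<close> R by force
    moreover have "b' = b" if "(r, b') \<in> M" "(r, b) \<in> M" for b'
      using inj_onD[OF inj(1) _ that] by simp
    ultimately show ?thesis by blast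
  qed
  moreover have "\<exists>!r. (r, b) \<in> M" if "b \<in> B" for b
  proof -
    obtain r where "(r, b) \<in> M" using \<open>b \<in> B\<close> B by force
    moreover have "r' = r" if "(r', b) \<in> M" "(r, b) \<in> M" for r'
      using inj_onD[OF inj(2) _ that] by simp
    ultimately show ?thesis by blast
  qed
  ultimately show "bichromatic_perfect_matching R B M"
    unfolding bichromatic_perfect_matching_def using sub by simp
qed

lemma bichromatic_perfect_matching_insert:
  assumes "bichromatic_perfect_matching (R - {r}) (B - {b}) M" "r \<in> R" "b \<in> B"
  shows "bichromatic_perfect_matching R B (insert (r, b) M)"
  using assms unfolding bichromatic_perfect_matching_iff_inj
  by (auto simp: inj_on_insert insert_absorb)

lemma bichromatic_perfect_matching_remove:
  assumes "bichromatic_perfect_matching R B M" "(r, b) \<in> M"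
  shows "bichromatic_perfect_matching (R - {r}) (B - {b}) (M - {(r, b)})"
  using assms unfolding bichromatic_perfect_matching_iff_inj
  by (auto simp: inj_on_diff inj_on_image_set_diff) (metis inj_onD fst_conv snd_conv prod.inject)+

lemma finite_bichromatic_perfect_matching:
  "bichromatic_perfect_matching R B M \<Longrightarrow> finite R \<Longrightarrow> finite M"
  unfolding bichromatic_perfect_matching_iff_inj by (metis finite_imageD)

lemma matching_weight_remove:
  "finite M \<Longrightarrow> (r, b) \<in> M \<Longrightarrow> matching_weight M = \<bar>r - b\<bar> + matching_weight (M - {(r, b)})"
  unfolding matching_weight_def by (simp add: sum.remove)

lemma matching_weight_insert:
  "finite M \<Longrightarrow> (r, b) \<notin> M \<Longrightarrow> matching_weight (insert (r, b) M) = \<bar>r - b\<bar> + matching_weight M"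
  unfolding matching_weight_def by simp

lemma bichromatic_perfect_matching_swap:
  assumes M: "bichromatic_perfect_matching R B M" and "finite R"
    and rb: "(\<rho>, b) \<in> M" and r\<beta>: "(r, \<beta>) \<in> M" and "b \<noteq> \<beta>"
  defines "M' \<equiv> insert (\<rho>, \<beta>) (insert (r, b) (M - {(\<rho>, b)} - {(r, \<beta>)}))"
  shows "bichromatic_perfect_matching R B M'"
    and "matching_weight M' + \<bar>\<rho> - b\<bar> + \<bar>r - \<beta>\<bar> = matching_weight M + \<bar>\<rho> - \<beta>\<bar> + \<bar>r - b\<bar>"
proof -
  define N where "N = M - {(\<rho>, b)} - {(r, \<beta>)}"
  have M1: "bichromatic_perfect_matching (R - {\<rho>}) (B - {b}) (M - {(\<rho>, b)})"
    using M rb by (rule bichromatic_perfect_matching_remove)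
  moreover have "(r, \<beta>) \<in> M - {(\<rho>, b)}"
    using r\<beta> \<open>b \<noteq> \<beta>\<close> by simp
  ultimately have N: "bichromatic_perfect_matching (R - {\<rho>} - {r}) (B - {b} - {\<beta>}) N"
    unfolding N_def by (rule bichromatic_perfect_matching_remove)
  have "r \<in> R - {\<rho>}"
    using M1 \<open>(r, \<beta>) \<in> M - {(\<rho>, b)}\<close> unfolding bichromatic_perfect_matching_iff_inj
    by (metis fst_conv image_eqI)
  moreover have "b \<in> B - {\<beta>}"
    using M rb \<open>b \<noteq> \<beta>\<close> unfolding bichromatic_perfect_matching_iff_inj by force
  moreover have "B - {b} - {\<beta>} = B - {\<beta>} - {b}"
    by blast
  ultimately have N': "bichromatic_perfect_matching (R - {\<rho>}) (B - {\<beta>}) (insert (r, b) N)"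
    using N by (intro bichromatic_perfect_matching_insert) simp_all
  moreover have "\<rho> \<in> R" "\<beta> \<in> B"
    using M rb r\<beta> unfolding bichromatic_perfect_matching_iff_inj by force+
  ultimately show M': "bichromatic_perfect_matching R B M'"
    unfolding M'_def N_def by (rule bichromatic_perfect_matching_insert)
  show "matching_weight M' + \<bar>\<rho> - b\<bar> + \<bar>r - \<beta>\<bar> = matching_weight M + \<bar>\<rho> - \<beta>\<bar> + \<bar>r - b\<bar>"
  proof -
    have fin: "finite M"
      using M \<open>finite R\<close> by (rule finite_bichromatic_perfect_matching)
    have "fst ` N = R - {\<rho>} - {r}" "fst ` insert (r, b) N = R - {\<rho>}"
      using N N' by (simp_all add: bichromatic_perfect_matching_iff_inj)
    then have "(r, b) \<notin> N" "(\<rho>, \<beta>) \<notin> insert (r, b) N"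
      by (metis Diff_iff fst_conv image_eqI insertI1)+
    moreover have "finite N"
      using fin by (simp add: N_def)
    ultimately have "matching_weight M' = \<bar>\<rho> - \<beta>\<bar> + (\<bar>r - b\<bar> + matching_weight N)"
      unfolding M'_def N_def[symmetric] by (simp add: matching_weight_insert)
    moreover have "matching_weight M = \<bar>\<rho> - b\<bar> + (\<bar>r - \<beta>\<bar> + matching_weight N)"
      using fin rb \<open>(r, \<beta>) \<in> M - {(\<rho>, b)}\<close> unfolding N_def by (simp add: matching_weight_remove)
    ultimately show ?thesis by simp
  qed
qed

lemma bichromatic_perfect_matching_exchange:
  assumes M: "bichromatic_perfect_matching R B M" and "finite R" "\<rho> \<in> R" "\<beta> \<in> B"
    and exchange: "\<And>r b. r \<in> R - {\<rho>} \<Longrightarrow> b \<in> B - {\<beta>} \<Longrightarrow>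
      \<bar>\<rho> - \<beta>\<bar> + \<bar>r - b\<bar> \<le> \<bar>\<rho> - b\<bar> + \<bar>r - \<beta>\<bar>"
  obtains M' where "bichromatic_perfect_matching R B M'" "(\<rho>, \<beta>) \<in> M'"
    "matching_weight M' \<le> matching_weight M"
proof -
  obtain b r where rb: "(\<rho>, b) \<in> M" and r\<beta>: "(r, \<beta>) \<in> M"
    using M \<open>\<rho> \<in> R\<close> \<open>\<beta> \<in> B\<close> unfolding bichromatic_perfect_matching_def by blast
  show ?thesis
  proof (cases "b = \<beta>")
    case True
    with M rb show ?thesis using that[of M] by simp
  next
    case False
    have "r \<in> R - {\<rho>}" "b \<in> B - {\<beta>}"
      using M rb r\<beta> False unfolding bichromatic_perfect_matching_def by blast+
    with exchange bichromatic_perfect_matching_swap[OF M \<open>finite R\<close> rb r\<beta> False]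
    show ?thesis by (intro that) force+
  qed
qed

lemma min_weight_matching_insert:
  assumes M: "min_weight_matching (R - {\<rho>}) (B - {\<beta>}) M" and "finite R" "\<rho> \<in> R" "\<beta> \<in> B"
    and exchange: "\<And>r b. r \<in> R - {\<rho>} \<Longrightarrow> b \<in> B - {\<beta>} \<Longrightarrow>
      \<bar>\<rho> - \<beta>\<bar> + \<bar>r - b\<bar> \<le> \<bar>\<rho> - b\<bar> + \<bar>r - \<beta>\<bar>"
  shows "min_weight_matching R B (insert (\<rho>, \<beta>) M)"
proof -
  have M_pm: "bichromatic_perfect_matching (R - {\<rho>}) (B - {\<beta>}) M"
    using M unfolding min_weight_matching_def by blast
  have "matching_weight (insert (\<rho>, \<beta>) M) \<le> matching_weight M'"
    if M': "bichromatic_perfect_matching R B M'" for M'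
  proof -
    obtain M'' where M'': "bichromatic_perfect_matching R B M''" "(\<rho>, \<beta>) \<in> M''"
      "matching_weight M'' \<le> matching_weight M'"
      using bichromatic_perfect_matching_exchange[OF M' assms(2-4) exchange] by blast
    have "bichromatic_perfect_matching (R - {\<rho>}) (B - {\<beta>}) (M'' - {(\<rho>, \<beta>)})"
      using M''(1,2) by (rule bichromatic_perfect_matching_remove)
    then have "matching_weight M \<le> matching_weight (M'' - {(\<rho>, \<beta>)})"
      using M unfolding min_weight_matching_def by blast
    moreover have "finite M" "finite M''"
      using M_pm M''(1) \<open>finite R\<close> by (auto intro: finite_bichromatic_perfect_matching)
    moreover have "(\<rho>, \<beta>) \<notin> M"
      using M_pm unfolding bichromatic_perfect_matching_def by blast
    ultimately show ?thesis
      using M''(2,3) by (simp add: matching_weight_insert matching_weight_remove[of M''])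
  qed
  moreover have "bichromatic_perfect_matching R B (insert (\<rho>, \<beta>) M)"
    using M_pm assms(3,4) by (rule bichromatic_perfect_matching_insert)
  ultimately show ?thesis
    unfolding min_weight_matching_def by blast
qed

lemma arcs_cross_commute: "arcs_cross e f \<longleftrightarrow> arcs_cross f e"
  unfolding arcs_cross_def Let_def by auto

lemma arcs_cross_endpoint_between:
  "arcs_cross e f \<Longrightarrow> \<exists>y\<in>{fst f, snd f}. min (fst e) (snd e) < y \<and> y < max (fst e) (snd e)"
  unfolding arcs_cross_def Let_def by (auto simp: min_def max_def split: if_splits)

lemma non_crossing_insert:
  assumes "non_crossing M" "M \<subseteq> R \<times> B"
    and outside: "\<And>x. x \<in> R \<union> B \<Longrightarrow> x < min r b \<or> max r b < x"
  shows "non_crossing (insert (r, b) M)"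
proof -
  have "\<not> arcs_cross (r, b) f" if "f \<in> insert (r, b) M" for f
  proof
    assume "arcs_cross (r, b) f"
    then obtain y where y: "y \<in> {fst f, snd f}" "min r b < y" "y < max r b"
      using arcs_cross_endpoint_between by fastforce
    show False
    proof (cases "f = (r, b)")
      case True
      with y show False by auto
    next
      case False
      with that have "y \<in> R \<union> B"
        using y(1) \<open>M \<subseteq> R \<times> B\<close> by auto
      with y(2,3) outside show False
        by fastforce
    qed
  qed
  then show ?thesis
    using \<open>non_crossing M\<close> arcs_cross_commute unfolding non_crossing_def by blast
qed

lemma match_scan_monochromatic_prefix:
  assumes "\<forall>a\<in>set pre. snd a = snd p" "\<forall>a\<in>set stk. snd a = snd p" "snd q \<noteq> snd p"
  shows "match_scan (pre @ p # q # ys) stk =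
    (if snd q then (fst q, fst p) else (fst p, fst q)) # match_scan (pre @ ys) stk"
  using assms
proof (induction pre arbitrary: stk)
  case Nil
  show ?case
    using Nil.prems(2,3) by (cases stk) simp_all
next
  case (Cons a pre)
  then show ?case
    by (cases stk) auto
qed

lemma first_colour_change:
  assumes "x \<in> set ps" "snd x \<noteq> snd (hd ps)"
  shows "\<exists>pre p q ys. ps = pre @ p # q # ys \<and> (\<forall>a\<in>set pre. snd a = snd p) \<and> snd q \<noteq> snd p"
  using assms
proof (induction ps)
  case (Cons a xs)
  then obtain z zs where xs: "xs = z # zs"
    by (cases xs) auto
  show ?case
  proof (cases "snd z = snd a")
    case True
    with Cons.prems xs have "x \<in> set xs" "snd x \<noteq> snd (hd xs)"
      by auto
    then obtain pre p q ys where
      dec: "xs = pre @ p # q # ys" "\<forall>a\<in>set pre. snd a = snd p" "snd q \<noteq> snd p"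
      using Cons.IH by blast
    have "snd a = snd p"
      using True xs dec by (cases pre) auto
    with dec show ?thesis
      by (intro exI[of _ "a # pre"]) auto
  next
    case False
    with xs show ?thesis
      by (intro exI[of _ "[]"]) auto
  qed
qed simp

lemma first_colour_change_exchange:
  fixes r b :: real
  assumes sorted: "sorted_wrt (\<lambda>p q. fst p < fst q) (pre @ p # q # ys)"
    and pre: "\<forall>a\<in>set pre. snd a = snd p" and pq_colour: "snd q \<noteq> snd p"
    and r: "(r, True) \<in> set (pre @ ys)" and b: "(b, False) \<in> set (pre @ ys)"
  defines "\<rho> \<equiv> if snd q then fst q else fst p" and "\<beta> \<equiv> if snd q then fst p else fst q"
  shows "\<bar>\<rho> - \<beta>\<bar> + \<bar>r - b\<bar> \<le> \<bar>\<rho> - b\<bar> + \<bar>r - \<beta>\<bar>"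
proof -
  have pq: "fst p < fst q"
    and outside: "\<And>x. x \<in> set (pre @ ys) \<Longrightarrow> fst x < fst p \<or> fst q < fst x"
    and right: "\<And>x. x \<in> set (pre @ ys) \<Longrightarrow> snd x \<noteq> snd p \<Longrightarrow> fst q < fst x"
    using sorted pre by (auto simp: sorted_wrt_append)
  show ?thesis
  proof (cases "snd q")
    case True
    with pq_colour right[OF r] have "fst q < r"
      by simp
    moreover have "b < fst p \<or> fst q < b"
      using outside[OF b] by simp
    moreover have "\<rho> = fst q" "\<beta> = fst p"
      using True by (simp_all add: \<rho>_def \<beta>_def)
    ultimately show ?thesis
      using pq by arith
  next
    case False
    with pq_colour right[OF b] have "fst q < b"
      by simp
    moreover have "r < fst p \<or> fst q < r"
      using outside[OF r] by simp
    moreover have "\<rho> = fst p" "\<beta> = fst q"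
      using False by (simp_all add: \<rho>_def \<beta>_def)
    ultimately show ?thesis
      using pq by arith
  qed
qed

lemma coloured_points_first_colour_change:
  assumes sorted: "sorted_wrt (\<lambda>p q. fst p < fst q) (pre @ p # q # ys)"
    and ps: "set (pre @ p # q # ys) = coloured_points R B" and pq_colour: "snd q \<noteq> snd p"
  defines "\<rho> \<equiv> if snd q then fst q else fst p" and "\<beta> \<equiv> if snd q then fst p else fst q"
  shows "set (pre @ ys) = coloured_points (R - {\<rho>}) (B - {\<beta>})" and "\<rho> \<in> R" "\<beta> \<in> B"
proof -
  have pq_coloured: "{p, q} = {(\<rho>, True), (\<beta>, False)}"
    using pq_colour by (cases p; cases q) (auto simp: \<rho>_def \<beta>_def)
  have "p \<notin> set (pre @ ys)" "q \<notin> set (pre @ ys)"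
    using sorted by (fastforce simp: sorted_wrt_append)+
  then have "set (pre @ ys) = set (pre @ p # q # ys) - {p, q}"
    by auto
  then show "set (pre @ ys) = coloured_points (R - {\<rho>}) (B - {\<beta>})"
    using ps pq_coloured by (simp add: coloured_points_remove)
  have "{p, q} \<subseteq> coloured_points R B"
    using ps by auto
  then show "\<rho> \<in> R" "\<beta> \<in> B"
    unfolding pq_coloured by simp_all
qed

lemma match_scan_first_pair:
  assumes sorted: "sorted_wrt (\<lambda>p q. fst p < fst q) ps" and ps: "set ps = coloured_points R B"
    and "r \<in> R" "b \<in> B"
  obtains \<rho> \<beta> ps' where
    "match_scan ps [] = (\<rho>, \<beta>) # match_scan ps' []" "length ps' < length ps"
    "sorted_wrt (\<lambda>p q. fst p < fst q) ps'" "set ps' = coloured_points (R - {\<rho>}) (B - {\<beta>})"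
    "\<rho> \<in> R" "\<beta> \<in> B"
    "\<And>x. x \<in> (R - {\<rho>}) \<union> (B - {\<beta>}) \<Longrightarrow> x < min \<rho> \<beta> \<or> max \<rho> \<beta> < x"
    "\<And>r b. r \<in> R - {\<rho>} \<Longrightarrow> b \<in> B - {\<beta>} \<Longrightarrow>
       \<bar>\<rho> - \<beta>\<bar> + \<bar>r - b\<bar> \<le> \<bar>\<rho> - b\<bar> + \<bar>r - \<beta>\<bar>"
proof -
  have "(r, True) \<in> set ps" "(b, False) \<in> set ps"
    using ps \<open>r \<in> R\<close> \<open>b \<in> B\<close> by simp_all
  then have "\<exists>x\<in>set ps. snd x \<noteq> snd (hd ps)"
    by (metis snd_conv)
  then obtain pre p q ys where ps_eq: "ps = pre @ p # q # ys"
    and pre: "\<forall>a\<in>set pre. snd a = snd p" and pq_colour: "snd q \<noteq> snd p"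
    using first_colour_change by blast
  define ps' where "ps' = pre @ ys"
  define \<rho> where "\<rho> = (if snd q then fst q else fst p)"
  define \<beta> where "\<beta> = (if snd q then fst p else fst q)"
  have scan: "match_scan ps [] = (\<rho>, \<beta>) # match_scan ps' []"
    unfolding ps_eq ps'_def \<rho>_def \<beta>_def using match_scan_monochromatic_prefix[OF pre _ pq_colour] by simp
  have pq: "fst p < fst q" and sorted': "sorted_wrt (\<lambda>p q. fst p < fst q) ps'"
    and outside: "\<And>x. x \<in> set ps' \<Longrightarrow> fst x < fst p \<or> fst q < fst x"
    using sorted unfolding ps_eq ps'_def by (auto simp: sorted_wrt_append)
  have ps': "set ps' = coloured_points (R - {\<rho>}) (B - {\<beta>})" and "\<rho> \<in> R" "\<beta> \<in> B"
    using coloured_points_first_colour_change[OF sorted[unfolded ps_eq] ps[unfolded ps_eq] pq_colour]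
    unfolding \<rho>_def \<beta>_def ps'_def by blast+
  have "min \<rho> \<beta> = fst p" "max \<rho> \<beta> = fst q"
    using pq by (simp_all add: \<rho>_def \<beta>_def)
  moreover have "x < fst p \<or> fst q < x" if "x \<in> (R - {\<rho>}) \<union> (B - {\<beta>})" for x
  proof -
    have "(x, True) \<in> set ps' \<or> (x, False) \<in> set ps'"
      using that by (auto simp: ps')
    then show ?thesis
      using outside by fastforce
  qed
  moreover have "\<bar>\<rho> - \<beta>\<bar> + \<bar>r' - b'\<bar> \<le> \<bar>\<rho> - b'\<bar> + \<bar>r' - \<beta>\<bar>"
    if "r' \<in> R - {\<rho>}" "b' \<in> B - {\<beta>}" for r' b'
  proof -
    have "(r', True) \<in> set ps'" "(b', False) \<in> set ps'"
      using that by (simp_all add: ps')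
    then show ?thesis
      using first_colour_change_exchange[OF sorted[unfolded ps_eq] pre pq_colour]
      unfolding \<rho>_def \<beta>_def ps'_def by blast
  qed
  moreover have "length ps' < length ps"
    unfolding ps_eq ps'_def by simp
  ultimately show ?thesis
    using that[OF scan _ sorted' ps' \<open>\<rho> \<in> R\<close> \<open>\<beta> \<in> B\<close>] by simp
qed

lemma match_scan_min_weight_non_crossing:
  assumes "finite R" "finite B" "card R = card B"
    and "sorted_wrt (\<lambda>p q. fst p < fst q) ps" "set ps = coloured_points R B"
  shows "min_weight_matching R B (set (match_scan ps [])) \<and> non_crossing (set (match_scan ps []))"
  using assms
proof (induction "length ps" arbitrary: ps R B rule: less_induct)
  case less
  show ?case
  proof (cases "R = {}")
    case True
    with less.prems(1-3) have "B = {}"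
      by simp
    with True less.prems(5) have "ps = []"
      by (simp add: coloured_points_def)
    with True \<open>B = {}\<close> show ?thesis
      by (simp add: min_weight_matching_def bichromatic_perfect_matching_def non_crossing_def
          matching_weight_def)
  next
    case False
    with less.prems(1-3) obtain r b where "r \<in> R" "b \<in> B"
      by (metis card_0_eq ex_in_conv)
    then obtain \<rho> \<beta> ps' where scan: "match_scan ps [] = (\<rho>, \<beta>) # match_scan ps' []"
      and "length ps' < length ps" "sorted_wrt (\<lambda>p q. fst p < fst q) ps'"
      and ps': "set ps' = coloured_points (R - {\<rho>}) (B - {\<beta>})"
      and "\<rho> \<in> R" "\<beta> \<in> B"
      and outside: "\<And>x. x \<in> (R - {\<rho>}) \<union> (B - {\<beta>}) \<Longrightarrow> x < min \<rho> \<beta> \<or> max \<rho> \<beta> < x"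
      and exchange: "\<And>r b. r \<in> R - {\<rho>} \<Longrightarrow> b \<in> B - {\<beta>} \<Longrightarrow>
        \<bar>\<rho> - \<beta>\<bar> + \<bar>r - b\<bar> \<le> \<bar>\<rho> - b\<bar> + \<bar>r - \<beta>\<bar>"
      using match_scan_first_pair[OF less.prems(4,5)] by blast
    define S where "S = set (match_scan ps' [])"
    have "card (R - {\<rho>}) = card (B - {\<beta>})"
      using less.prems(1-3) \<open>\<rho> \<in> R\<close> \<open>\<beta> \<in> B\<close> by simp
    then have S: "min_weight_matching (R - {\<rho>}) (B - {\<beta>}) S" "non_crossing S"
      using less.hyps \<open>length ps' < length ps\<close> \<open>sorted_wrt _ ps'\<close> ps' less.prems(1,2)
      unfolding S_def by blast+
    have "S \<subseteq> (R - {\<rho>}) \<times> (B - {\<beta>})"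
      using S(1) unfolding min_weight_matching_def bichromatic_perfect_matching_def by blast
    from S(2) this outside have "non_crossing (insert (\<rho>, \<beta>) S)"
      by (rule non_crossing_insert)
    moreover have "min_weight_matching R B (insert (\<rho>, \<beta>) S)"
      using S(1) less.prems(1) \<open>\<rho> \<in> R\<close> \<open>\<beta> \<in> B\<close> exchange by (rule min_weight_matching_insert)
    ultimately show ?thesis
      by (simp add: scan S_def)
  qed
qed

lemma T_match_scan_le: "T_match_scan ps stk \<le> 6 * length ps + 1"
  by (induction ps stk rule: T_match_scan.induct) auto

theorem mainTheorem6:
  "\<exists>c::real. \<forall>(R::real set) (B::real set) (ps::(real \<times> bool) list).
     finite R \<and> finite B \<and> R \<inter> B = {} \<and> card R = card B \<and>
     sorted_wrt (\<lambda>p q. fst p < fst q) ps \<and>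
     set ps = (\<lambda>r. (r, True)) ` R \<union> (\<lambda>b. (b, False)) ` B
     \<longrightarrow> min_weight_nc_matching R B (set (line_matching ps)) \<and>
         real (T_line_matching ps) \<le> c * real (card R) + c"
proof (intro exI[of _ 12] allI impI, elim conjE)
  fix R B :: "real set" and ps :: "(real \<times> bool) list"
  assume "finite R" "finite B" "R \<inter> B = {}" "card R = card B"
    and sorted: "sorted_wrt (\<lambda>p q. fst p < fst q) ps"
    and "set ps = (\<lambda>r. (r, True)) ` R \<union> (\<lambda>b. (b, False)) ` B"
  then have ps: "set ps = coloured_points R B"
    by (simp add: coloured_points_def)
  have "min_weight_matching R B (set (line_matching ps)) \<and> non_crossing (set (line_matching ps))"
    unfolding line_matching_def
    using \<open>finite R\<close> \<open>finite B\<close> \<open>card R = card B\<close> sorted ps by (rule match_scan_min_weight_non_crossing)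
  then have "min_weight_nc_matching R B (set (line_matching ps))"
    unfolding min_weight_nc_matching_def min_weight_matching_def by blast
  moreover have "T_line_matching ps \<le> 12 * card R + 2"
    using T_match_scan_le[of ps "[]"] length_eq_card_coloured_points[OF sorted ps \<open>finite R\<close> \<open>finite B\<close>]
      \<open>card R = card B\<close> by (simp add: T_line_matching_def)
  ultimately show "min_weight_nc_matching R B (set (line_matching ps)) \<and>
      real (T_line_matching ps) \<le> 12 * real (card R) + 12"
    by simp
qed

end
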